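(* Let $(a_k)_{k\ge1}$ be a sequence of positive real numbers for which there exist $\rho\in(0,1)$, constants $c,C>0$ and $m\in\mathbb{N}$ such that $ck^m\rho^k\le a_k\le Ck^m\rho^k$ for all sufficiently large $k$. Define $K(\epsilon)=\min\{k\in\mathbb{N}: a_k<\epsilon\}$ for $\epsilon>0$. Then, as $\epsilon\to0$, $$K(\epsilon)=\Omega\left(\frac{\rho}{1-\rho}\ln(1/\epsilon)\right)\quad\text{and}\quad K(\epsilon)=O\left(\frac{1}{1-\rho}\ln(1/\epsilon)\right),$$ and consequently $K(\epsilon)=\Theta\left(\frac{\rho}{1-\rho}\ln(1/\epsilon)\right)$. *)

theory Defs
  imports Complex_Main "HOL-Library.Landau_Symbols"
begin

definition Kmin :: "(nat \<Rightarrow> real) \<Rightarrow> real \<Rightarrow> nat" where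
  "Kmin a \<epsilon> = (LEAST k. k \<ge> 1 \<and> a k < \<epsilon>)"

end

theory Submission
  imports Defs "HOL-Real_Asymp.Real_Asymp"
begin

text \<open>
  Only the geometric factor matters: eventually \<open>c \<rho>\<^sup>k \<le> a\<^sub>k \<le> \<sigma>\<^sup>k\<close> with
  \<open>\<sigma> = \<surd>\<rho>\<close>, since \<open>k\<^sup>m\<close> is at least 1 and is absorbed by \<open>(\<rho>/\<sigma>)\<^sup>k\<close>.
  The upper bound shows that \<open>k \<approx> ln (1/\<epsilon>) / ln (1/\<sigma>)\<close> already satisfies
  \<open>a\<^sub>k < \<epsilon>\<close>. For the lower bound, once \<open>\<epsilon>\<close> is below the finitely many initial
  terms, \<open>K(\<epsilon>)\<close> lies in the range where \<open>c \<rho>\<^sup>K \<le> a\<^sub>K < \<epsilon>\<close>, forcing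
  \<open>K(\<epsilon>) \<ge> (ln (1/\<epsilon>) + ln c) / ln (1/\<rho>)\<close>. Hence \<open>K(\<epsilon>) = \<Theta>(ln (1/\<epsilon>))\<close>, and the
  constant factors \<open>\<rho>/(1-\<rho>)\<close> and \<open>1/(1-\<rho>)\<close> do not change \<open>\<Theta>\<close>-classes.
\<close>

lemma Kmin_witness:
  assumes "1 \<le> k" "a k < \<epsilon>"
  shows "1 \<le> Kmin a \<epsilon>" "a (Kmin a \<epsilon>) < \<epsilon>" "Kmin a \<epsilon> \<le> k"
proof -
  have "1 \<le> Kmin a \<epsilon> \<and> a (Kmin a \<epsilon>) < \<epsilon>"
    unfolding Kmin_def by (rule LeastI[of _ k]) (use assms in auto)
  then show "1 \<le> Kmin a \<epsilon>" "a (Kmin a \<epsilon>) < \<epsilon>" by auto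
  show "Kmin a \<epsilon> \<le> k"
    unfolding Kmin_def by (rule Least_le) (use assms in auto)
qed

lemma eventually_poly_times_geometric_le:
  fixes \<rho> \<sigma> C :: real
  assumes "0 < \<rho>" "\<rho> < \<sigma>"
  shows "\<forall>\<^sub>F k in sequentially. C * real k ^ m * \<rho> ^ k \<le> \<sigma> ^ k"
proof -
  define q where "q = \<rho> / \<sigma>"
  have "0 < q" "q < 1" using assms by (simp_all add: q_def)
  then have "(\<lambda>k. C * real k ^ m * q ^ k) \<longlonglongrightarrow> 0" by real_asymp
  then have "\<forall>\<^sub>F k in sequentially. C * real k ^ m * q ^ k < 1"
    by (rule order_tendstoD) simp
  then show ?thesis
  proof eventually_elim
    case (elim k)
    have "C * real k ^ m * \<rho> ^ k = (C * real k ^ m * q ^ k) * \<sigma> ^ k"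
      using assms by (simp add: q_def power_divide)
    also have "\<dots> \<le> 1 * \<sigma> ^ k"
      using elim assms by (intro mult_right_mono) auto
    finally show ?case by simp
  qed
qed

lemma Kmin_bigo_ln:
  assumes "0 < \<sigma>" "\<sigma> < 1" "\<forall>\<^sub>F k in sequentially. a k \<le> \<sigma> ^ k"
  shows "(\<lambda>\<epsilon>. real (Kmin a \<epsilon>)) \<in> O[at_right 0](\<lambda>\<epsilon>. ln (1 / \<epsilon>))"
proof -
  obtain N where N: "\<And>k. N \<le> k \<Longrightarrow> a k \<le> \<sigma> ^ k"
    using assms(3) unfolding eventually_sequentially by blast
  define L where "L = - ln \<sigma>"
  have L: "0 < L" using assms by (simp add: L_def)
  have "\<forall>\<^sub>F \<epsilon> in at_right 0. real (Kmin a \<epsilon>) \<le> real N + 2 + ln (1 / \<epsilon>) / L"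
    unfolding eventually_at_right_field
  proof (intro exI[of _ 1] conjI allI impI)
    fix \<epsilon> :: real
    assume \<epsilon>: "0 < \<epsilon>" "\<epsilon> < 1"
    define x where "x = ln (1 / \<epsilon>) / L"
    have "0 < x" using \<epsilon> L by (simp add: x_def)
    define k where "k = Suc N + nat \<lceil>x\<rceil>"
    have k_bounds: "x < real k" "real k \<le> real N + 2 + x"
      using \<open>0 < x\<close> by (simp_all add: k_def) linarith+
    have "ln (\<sigma> ^ k) < ln \<epsilon>"
      using k_bounds(1) L \<epsilon> assms(1)
      by (simp add: ln_realpow x_def L_def ln_div field_simps)
    then have "\<sigma> ^ k < \<epsilon>" using assms(1) \<epsilon> by simp
    then have "a k < \<epsilon>" using N[of k] by (simp add: k_def)
    then have "Kmin a \<epsilon> \<le> k" by (rule Kmin_witness(3)[rotated]) (simp add: k_def)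
    then show "real (Kmin a \<epsilon>) \<le> real N + 2 + ln (1 / \<epsilon>) / L"
      using k_bounds(2) by (simp add: x_def)
  qed simp
  then have "(\<lambda>\<epsilon>. real (Kmin a \<epsilon>)) \<in> O[at_right 0](\<lambda>\<epsilon>. real N + 2 + ln (1 / \<epsilon>) / L)"
    by (intro landau_o.big_mono) (auto elim: eventually_mono)
  also have "(\<lambda>\<epsilon>. real N + 2 + ln (1 / \<epsilon>) / L) \<in> O[at_right 0](\<lambda>\<epsilon>. ln (1 / \<epsilon>))"
    using L by real_asymp
  finally show ?thesis .
qed

lemma Kmin_bigomega_ln:
  fixes \<rho> c :: real
  assumes pos: "\<And>k. 1 \<le> k \<Longrightarrow> 0 < a k" and lim: "a \<longlonglongrightarrow> 0"
    and "0 < c" "0 < \<rho>" "\<rho> < 1" "\<forall>\<^sub>F k in sequentially. c * \<rho> ^ k \<le> a k"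
  shows "(\<lambda>\<epsilon>. real (Kmin a \<epsilon>)) \<in> \<Omega>[at_right 0](\<lambda>\<epsilon>. ln (1 / \<epsilon>))"
proof -
  obtain N where N: "\<And>k. N \<le> k \<Longrightarrow> c * \<rho> ^ k \<le> a k"
    using assms(6) unfolding eventually_sequentially by blast
  define L where "L = - ln \<rho>"
  have L: "0 < L" using assms by (simp add: L_def)
  \<comment> \<open>below all of \<open>a\<^sub>1, \<dots>, a\<^sub>N\<close>, the index \<open>K(\<epsilon>)\<close> must exceed \<open>N\<close>\<close>
  define \<delta> where "\<delta> = Min (a ` {1..Suc N})"
  have "0 < \<delta>" using pos by (simp add: \<delta>_def)
  have "\<forall>\<^sub>F \<epsilon> in at_right 0. (ln (1 / \<epsilon>) + ln c) / L \<le> real (Kmin a \<epsilon>)"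
    unfolding eventually_at_right_field
  proof (intro exI[of _ \<delta>] conjI allI impI)
    fix \<epsilon> :: real
    assume \<epsilon>: "0 < \<epsilon>" "\<epsilon> < \<delta>"
    obtain k0 where "\<And>k. k0 \<le> k \<Longrightarrow> a k < \<epsilon>"
      using order_tendstoD(2)[OF lim \<open>0 < \<epsilon>\<close>] unfolding eventually_sequentially by blast
    then obtain k where "a k < \<epsilon>" "1 \<le> k" by (meson le_add1 le_add2)
    note K = Kmin_witness[of k a \<epsilon>, OF \<open>1 \<le> k\<close> \<open>a k < \<epsilon>\<close>]
    define K where "K = Kmin a \<epsilon>"
    have "N \<le> K"
    proof (rule ccontr)
      assume "\<not> N \<le> K"
      then have "\<delta> \<le> a K" using K(1) by (simp add: \<delta>_def K_def)
      then show False using K(2) \<epsilon>(2) by (simp add: K_def)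
    qed
    then have "c * \<rho> ^ K < \<epsilon>" using N K(2) by (fastforce simp: K_def)
    then have "ln (c * \<rho> ^ K) < ln \<epsilon>" using assms \<epsilon> by simp
    then show "(ln (1 / \<epsilon>) + ln c) / L \<le> real (Kmin a \<epsilon>)"
      using assms \<epsilon> L
      by (simp add: ln_mult ln_realpow ln_div L_def K_def field_simps)
  qed (rule \<open>0 < \<delta>\<close>)
  moreover have "\<forall>\<^sub>F \<epsilon> in at_right 0. 0 \<le> (ln (1 / \<epsilon>) + ln c) / L"
    using L by real_asymp
  ultimately have "(\<lambda>\<epsilon>. real (Kmin a \<epsilon>)) \<in> \<Omega>[at_right 0](\<lambda>\<epsilon>. (ln (1 / \<epsilon>) + ln c) / L)"
    by (intro landau_omega.big_mono) (auto elim: eventually_elim2)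
  also have "(\<lambda>\<epsilon>. (ln (1 / \<epsilon>) + ln c) / L) \<in> \<Omega>[at_right 0](\<lambda>\<epsilon>. ln (1 / \<epsilon>))"
    using L by real_asymp
  finally show ?thesis .
qed

theorem lemmaB1:
  fixes a :: "nat \<Rightarrow> real" and \<rho> c C :: real and m :: nat
  assumes pos: "\<And>k. k \<ge> 1 \<Longrightarrow> a k > 0"
    and rho: "0 < \<rho>" "\<rho> < 1"
    and cC: "c > 0" "C > 0"
    and bounds: "\<forall>\<^sub>F k in sequentially.
        c * real k ^ m * \<rho> ^ k \<le> a k \<and> a k \<le> C * real k ^ m * \<rho> ^ k"
  shows "(\<lambda>\<epsilon>. real (Kmin a \<epsilon>)) \<in> \<Omega>[at_right 0](\<lambda>\<epsilon>. \<rho> / (1 - \<rho>) * ln (1 / \<epsilon>))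
    \<and> (\<lambda>\<epsilon>. real (Kmin a \<epsilon>)) \<in> O[at_right 0](\<lambda>\<epsilon>. 1 / (1 - \<rho>) * ln (1 / \<epsilon>))
    \<and> (\<lambda>\<epsilon>. real (Kmin a \<epsilon>)) \<in> \<Theta>[at_right 0](\<lambda>\<epsilon>. \<rho> / (1 - \<rho>) * ln (1 / \<epsilon>))"
proof -
  define \<sigma> where "\<sigma> = sqrt \<rho>"
  have \<sigma>: "0 < \<sigma>" "\<sigma> < 1" using rho by (auto simp: \<sigma>_def)
  have "\<rho> = \<sigma> * \<sigma>" using rho by (simp add: \<sigma>_def)
  also have "\<dots> < \<sigma>" using \<sigma> by (simp add: mult_less_cancel_left1)
  finally have "\<rho> < \<sigma>" .
  have upper: "\<forall>\<^sub>F k in sequentially. a k \<le> \<sigma> ^ k"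
    using bounds eventually_poly_times_geometric_le[OF rho(1) \<open>\<rho> < \<sigma>\<close>, of C m]
    by eventually_elim linarith
  have lower: "\<forall>\<^sub>F k in sequentially. c * \<rho> ^ k \<le> a k"
    using bounds eventually_ge_at_top[of 1]
  proof eventually_elim
    case (elim k)
    have "c * \<rho> ^ k \<le> c * real k ^ m * \<rho> ^ k"
      using elim cC rho by (simp add: mult_right_mono)
    then show ?case using elim by linarith
  qed
  have "a \<longlonglongrightarrow> 0"
  proof (rule tendsto_sandwich)
    show "\<forall>\<^sub>F k in sequentially. 0 \<le> a k"
      using eventually_ge_at_top[of 1] by eventually_elim (simp add: pos less_imp_le)
    show "(\<lambda>k. \<sigma> ^ k) \<longlonglongrightarrow> 0" using \<sigma> by (simp add: LIMSEQ_power_zero)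
  qed (use upper in auto)
  then have "(\<lambda>\<epsilon>. real (Kmin a \<epsilon>)) \<in> \<Theta>[at_right 0](\<lambda>\<epsilon>. ln (1 / \<epsilon>))"
    using Kmin_bigo_ln[OF \<sigma>(1,2) upper] Kmin_bigomega_ln[OF pos _ cC(1) rho lower] by blast
  moreover have "\<rho> / (1 - \<rho>) \<noteq> 0" "1 / (1 - \<rho>) \<noteq> 0" using rho by auto
  ultimately show ?thesis by auto
qed

end
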